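(* Let $n\ge2$, $1\le r\le n-1$, $\alpha,\beta,\gamma\in\mathbb{Z}_2^{n-r}$ and $\alpha',\beta',\gamma'\in\mathbb{Z}_2^{r}$. Then $$\mathrm{adp}^{\mathrm{XR}}_r(\alpha'\|\alpha,\ \beta'\|\beta\to\gamma\|\gamma')=\sum_{a,b,c\in\mathbb{Z}_2}\mathrm{padp}_{a,b}(\alpha,\beta,\gamma^{[c]})\,\mathrm{cadp}_{c}(\alpha'^{[a]},\beta'^{[b]},\gamma').$$
   Context: For $x\in\mathbb{Z}_2^m$, $x=(x_0,\dots,x_{m-1})$ is identified with the integer $\sum_i x_i2^{m-1-i}$; arithmetic on $\mathbb{Z}_2^n$ is modulo $2^n$. $\oplus$ is bitwise XOR, $x\lll r=(x_r,\dots,x_{n-1},x_0,\dots,x_{r-1})$, $\overline{x}$ is the bitwise complement, $x^{[a]}=x$ if $a=0$ and $x^{[a]}=\overline{x}$ if $a=1$, and $\alpha\|\beta$ is concatenation ($\alpha$ occupying the most significant positions). $\mathrm{adp}^{\mathrm{XR}}_r(\alpha,\beta\to\gamma)=4^{-n}\#\{(x,y)\in(\mathbb{Z}_2^n)^2: ((x+\alpha)\oplus(y+\beta))\lll r=((x\oplus y)\lll r)+\gamma\}$. Indices $0,\dots,7$ are identified with $\mathbb{Z}_2^3$ via $(p_0,p_1,p_2)\leftrightarrow4p_0+2p_1+p_2$; $e_0,\dots,e_7$ are the standard basis row vectors of $\mathbb{Q}^8$. $A_0$ is the $8\times8$ matrix $\frac14$ times the matrix with rows $(4,0,0,1,0,1,1,0)$,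 $(0,0,0,1,0,1,0,0)$, $(0,0,0,1,0,0,1,0)$, $(0,0,0,1,0,0,0,0)$, $(0,0,0,0,0,1,1,0)$, $(0,0,0,0,0,1,0,0)$, $(0,0,0,0,0,0,1,0)$, $(0,\dots,0)$ (rows and columns indexed $0,\dots,7$), and $(A_k)_{i,j}=(A_0)_{i\oplus k,j\oplus k}$ for $k\in\mathbb{Z}_2^3$. For $\alpha,\beta,\gamma\in\mathbb{Z}_2^m$ let $\omega_i=4\alpha_i+2\beta_i+\gamma_i$. Let $L_0=(1,0,1,0,1,0,1,0)$, $L_1=(0,1,0,1,0,1,0,1)$, $L_{0,0}=(1,1,0,0,0,0,0,0)$, $L_{0,1}=(0,0,1,1,0,0,0,0)$, $L_{1,0}=(0,0,0,0,1,1,0,0)$, $L_{1,1}=(0,0,0,0,0,0,1,1)$, and define $\mathrm{cadp}_c(\alpha,\beta,\gamma)=L_cA_{\omega_0}\cdots A_{\omega_{m-1}}e_0^T$ and $\mathrm{padp}_{a,b}(\alpha,\beta,\gamma)=L_{a,b}A_{\omega_0}\cdots A_{\omega_{m-1}}e_0^T$. *)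

theory Defs
  imports Complex_Main
begin

text \<open>Bit vectors in Z_2^m are lists of booleans of length m; element 0 is the
most significant bit, so xs is identified with sum_i xs_i 2^(m-1-i).\<close>

definition bv_val :: "bool list \<Rightarrow> nat" where
  "bv_val xs = (\<Sum>i<length xs. (if xs ! i then 2 ^ (length xs - 1 - i) else 0))"

definition bv_of :: "nat \<Rightarrow> nat \<Rightarrow> bool list" where
  "bv_of m x = map (\<lambda>i. bit x (m - 1 - i)) [0..<m]"

definition bv_add :: "bool list \<Rightarrow> bool list \<Rightarrow> bool list" where
  "bv_add xs ys = bv_of (length xs) ((bv_val xs + bv_val ys) mod 2 ^ length xs)"

definition bv_xor :: "bool list \<Rightarrow> bool list \<Rightarrow> bool list" where
  "bv_xor xs ys = map2 (\<noteq>) xs ys"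

definition bv_rotl :: "bool list \<Rightarrow> nat \<Rightarrow> bool list" where
  "bv_rotl xs r = rotate r xs"

definition bv_cpl :: "bool list \<Rightarrow> bool \<Rightarrow> bool list" where
  "bv_cpl xs a = (if a then map Not xs else xs)"

definition adpXR :: "nat \<Rightarrow> nat \<Rightarrow> bool list \<Rightarrow> bool list \<Rightarrow> bool list \<Rightarrow> real" where
  "adpXR n r \<alpha> \<beta> \<gamma> =
     real (card {(x, y). length x = n \<and> length y = n \<and>
        bv_rotl (bv_xor (bv_add x \<alpha>) (bv_add y \<beta>)) r
          = bv_add (bv_rotl (bv_xor x y) r) \<gamma>}) / 4 ^ n"

definition A0_int :: "nat list list" where
  "A0_int = [[4,0,0,1,0,1,1,0],
             [0,0,0,1,0,1,0,0],
             [0,0,0,1,0,0,1,0],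
             [0,0,0,1,0,0,0,0],
             [0,0,0,0,0,1,1,0],
             [0,0,0,0,0,1,0,0],
             [0,0,0,0,0,0,1,0],
             [0,0,0,0,0,0,0,0]]"

definition A0 :: "nat \<Rightarrow> nat \<Rightarrow> real" where
  "A0 i j = real (A0_int ! i ! j) / 4"

definition Amat :: "nat \<Rightarrow> nat \<Rightarrow> nat \<Rightarrow> real" where
  "Amat k i j = A0 (xor i k) (xor j k)"

text \<open>prodvec [w_0,...,w_{m-1}] = A_{w_0} ... A_{w_{m-1}} e_0^T (column vector).\<close>
fun prodvec :: "nat list \<Rightarrow> nat \<Rightarrow> real" where
  "prodvec [] = (\<lambda>i. if i = 0 then 1 else 0)"
| "prodvec (k # ks) = (\<lambda>i. \<Sum>j<8. Amat k i j * prodvec ks j)"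

definition omegas :: "bool list \<Rightarrow> bool list \<Rightarrow> bool list \<Rightarrow> nat list" where
  "omegas \<alpha> \<beta> \<gamma> =
     map (\<lambda>i. 4 * of_bool (\<alpha> ! i) + 2 * of_bool (\<beta> ! i) + of_bool (\<gamma> ! i)) [0..<length \<alpha>]"

definition rowvec :: "real list \<Rightarrow> (nat \<Rightarrow> real) \<Rightarrow> real" where
  "rowvec L v = (\<Sum>i<8. L ! i * v i)"

definition Lc :: "bool \<Rightarrow> real list" where
  "Lc c = (if c then [0,1,0,1,0,1,0,1] else [1,0,1,0,1,0,1,0])"

definition Lab :: "bool \<Rightarrow> bool \<Rightarrow> real list" where
  "Lab a b = (if \<not> a \<and> \<not> b then [1,1,0,0,0,0,0,0]
              else if \<not> a \<and> b then [0,0,1,1,0,0,0,0]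
              else if a \<and> \<not> b then [0,0,0,0,1,1,0,0]
              else [0,0,0,0,0,0,1,1])"

definition cadp :: "bool \<Rightarrow> bool list \<Rightarrow> bool list \<Rightarrow> bool list \<Rightarrow> real" where
  "cadp c \<alpha> \<beta> \<gamma> = rowvec (Lc c) (prodvec (omegas \<alpha> \<beta> \<gamma>))"

definition padp :: "bool \<Rightarrow> bool \<Rightarrow> bool list \<Rightarrow> bool list \<Rightarrow> bool list \<Rightarrow> real" where
  "padp a b \<alpha> \<beta> \<gamma> = rowvec (Lab a b) (prodvec (omegas \<alpha> \<beta> \<gamma>))"

end

theory Submission
  imports Defs
begin

text \<open>Read bit vectors as numbers and split \<open>x = x\<^sub>1 || x\<^sub>0\<close>, \<open>y = y\<^sub>1 || y\<^sub>0\<close> into their leading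
  \<open>r\<close> and trailing \<open>n - r\<close> bits. Rotation by \<open>r\<close> swaps the two halves, so the XR condition on
  \<open>(x, y)\<close> is the conjunction of the additive-differential condition
  \<open>(x\<^sub>0 + \<alpha>) \<oplus> (y\<^sub>0 + \<beta>) = (x\<^sub>0 \<oplus> y\<^sub>0) + \<gamma>\<close> on the low halves and the one for
  \<open>(\<alpha>', \<beta>', \<gamma>')\<close> on the high halves, coupled only through three carries: the carries \<open>a, b\<close>
  out of \<open>x\<^sub>0 + \<alpha>\<close> and \<open>y\<^sub>0 + \<beta>\<close> enter the high half, and the carry \<open>c\<close> out of
  \<open>(x\<^sub>1 \<oplus> y\<^sub>1) + \<gamma>'\<close> enters the low half.
  Counting the solutions of one such condition with prescribed incoming and outgoing carries bit by
  bit, from the least significant end, yields a product of the carry-transition matrices \<open>A\<^sub>\<omega>\<close>.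
  A nonzero incoming carry triple \<open>k\<close> is traded for complemented inputs, because \<open>A\<^sub>\<omega>\<^sub>\<oplus>\<^sub>k\<close> is \<open>A\<^sub>\<omega>\<close>
  conjugated by the permutation \<open>i \<mapsto> i \<oplus> k\<close>.\<close>

section \<open>Splitting numbers and sums\<close>

lemma xor_less_power2:
  fixes x y :: nat
  assumes "x < 2 ^ k" "y < 2 ^ k"
  shows "xor x y < 2 ^ k"
  using assms by (metis take_bit_nat_eq_self_iff take_bit_xor)

lemma xor_high_low:
  fixes h1 h2 l1 l2 :: nat
  assumes "l1 < 2 ^ k" "l2 < 2 ^ k"
  shows "xor (h1 * 2 ^ k + l1) (h2 * 2 ^ k + l2) = xor h1 h2 * 2 ^ k + xor l1 l2"
proof -
  let ?w = "xor (h1 * 2 ^ k + l1) (h2 * 2 ^ k + l2)"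
  have low: "take_bit k (h * 2 ^ k + l) = l" and high: "drop_bit k (h * 2 ^ k + l) = h"
    if "l < 2 ^ k" for h l :: nat
    using that by (simp_all add: take_bit_eq_mod drop_bit_eq_div)
  have "?w mod 2 ^ k = xor l1 l2"
    using assms by (simp add: low flip: take_bit_eq_mod)
  moreover have "?w div 2 ^ k = xor h1 h2"
    using assms by (simp add: high flip: drop_bit_eq_div)
  ultimately show ?thesis by (metis div_mult_mod_eq)
qed

lemma high_low_eq_iff:
  fixes h1 h2 l1 l2 :: nat
  assumes "l1 < 2 ^ k" "l2 < 2 ^ k"
  shows "h1 * 2 ^ k + l1 = h2 * 2 ^ k + l2 \<longleftrightarrow> h1 = h2 \<and> l1 = l2"
proof
  assume eq: "h1 * 2 ^ k + l1 = h2 * 2 ^ k + l2"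
  have "h1 = (h1 * 2 ^ k + l1) div 2 ^ k" "l1 = (h1 * 2 ^ k + l1) mod 2 ^ k"
    using assms by simp_all
  with eq assms show "h1 = h2 \<and> l1 = l2" by simp
qed simp

lemma high_low_mod:
  fixes h l :: nat
  assumes "l < 2 ^ k"
  shows "(h * 2 ^ k + l) mod 2 ^ (k + j) = (h mod 2 ^ j) * 2 ^ k + l"
  using assms by (simp add: power_add mod_mult2_eq)

lemma high_low_div:
  fixes h l :: nat
  assumes "l < 2 ^ k"
  shows "(h * 2 ^ k + l) div 2 ^ (k + j) = h div 2 ^ j"
  using assms by (simp add: power_add div_mult2_eq)

lemma carry_le_1:
  fixes x a c :: nat
  assumes "x < 2 ^ k" "a < 2 ^ k" "c \<le> 1"
  shows "(x + a + c) div 2 ^ k \<le> 1"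
proof -
  have "x + a + c < 2 * 2 ^ k" using assms by simp
  then show ?thesis using less_mult_imp_div_less[of "x + a + c" 2 "2 ^ k"] by simp
qed

lemma sum_lessThan_power2_add:
  "(\<Sum>x<2 ^ (k + j). f x) = (\<Sum>xh<2 ^ j. \<Sum>xl<2 ^ k. f (xh * 2 ^ k + xl :: nat))"
proof -
  have "(\<Sum>x\<in>{xh * 2 ^ k..<xh * 2 ^ k + 2 ^ k}. f x) = (\<Sum>xl<2 ^ k. f (xh * 2 ^ k + xl))" for xh
    using sum.shift_bounds_nat_ivl[of f 0 "xh * 2 ^ k" "2 ^ k"]
    by (simp add: atLeast0LessThan add.commute)
  then show ?thesis
    using sum.nat_group[of f "2 ^ k" "2 ^ j"] by (simp add: power_add mult.commute)
qed

lemma sum_interleaved_product: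
  "(\<Sum>xh\<in>A. \<Sum>xl\<in>B. \<Sum>yh\<in>C. \<Sum>yl\<in>D. \<Sum>d\<in>E. F xl yl d * G xh yh d) =
   (\<Sum>d\<in>E. (\<Sum>xl\<in>B. \<Sum>yl\<in>D. F xl yl d) * (\<Sum>xh\<in>A. \<Sum>yh\<in>C. G xh yh d :: 'a :: comm_semiring_0))"
proof -
  have inner: "(\<Sum>y1\<in>C'. \<Sum>y2\<in>D'. \<Sum>d\<in>E. f y2 d * g y1 d) =
      (\<Sum>d\<in>E. (\<Sum>y2\<in>D'. f y2 d) * (\<Sum>y1\<in>C'. g y1 d :: 'a))" for C' D' f g
  proof -
    have "(\<Sum>d\<in>E. (\<Sum>y2\<in>D'. f y2 d) * (\<Sum>y1\<in>C'. g y1 d)) =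
        (\<Sum>d\<in>E. \<Sum>y1\<in>C'. \<Sum>y2\<in>D'. f y2 d * g y1 d)"
      by (simp add: sum_product sum.swap[of _ D'])
    also have "\<dots> = (\<Sum>y1\<in>C'. \<Sum>d\<in>E. \<Sum>y2\<in>D'. f y2 d * g y1 d)"
      by (rule sum.swap)
    also have "\<dots> = (\<Sum>y1\<in>C'. \<Sum>y2\<in>D'. \<Sum>d\<in>E. f y2 d * g y1 d)"
      by (simp add: sum.swap[of _ E])
    finally show ?thesis by simp
  qed
  show ?thesis
    by (simp only: inner)
qed

lemma sum_UNIV_bool: "(\<Sum>a\<in>UNIV. f a) = f False + f True"
  by (simp add: UNIV_bool)

lemma sum_bool_triple:
  "(\<Sum>d\<in>(UNIV :: (bool \<times> bool \<times> bool) set). h d) = (\<Sum>a\<in>UNIV. \<Sum>b\<in>UNIV. \<Sum>c\<in>UNIV. h (a, b, c))"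
  by (simp add: UNIV_Times_UNIV[symmetric] sum.cartesian_product del: UNIV_Times_UNIV)

section \<open>Bit vectors as numbers\<close>

lemma bv_val_Nil [simp]: "bv_val [] = 0"
  by (simp add: bv_val_def)

lemma bv_val_Cons [simp]: "bv_val (b # xs) = of_bool b * 2 ^ length xs + bv_val xs"
proof -
  have "(\<Sum>i<length xs. if (b # xs) ! Suc i then 2 ^ (length (b # xs) - 1 - Suc i) else 0)
      = (\<Sum>i<length xs. if xs ! i then 2 ^ (length xs - 1 - i) else (0::nat))"
    by (rule sum.cong) auto
  then show ?thesis
    unfolding bv_val_def length_Cons sum.lessThan_Suc_shift by simp
qed

lemma bv_val_less: "bv_val xs < 2 ^ length xs"
  by (induction xs) auto

lemma bv_val_append: "bv_val (xs @ ys) = bv_val xs * 2 ^ length ys + bv_val ys"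
  by (induction xs) (auto simp: power_add algebra_simps)

lemma bv_val_inject:
  assumes "length xs = length ys" "bv_val xs = bv_val ys"
  shows "xs = ys"
  using assms
proof (induction xs arbitrary: ys)
  case (Cons a xs)
  then obtain b ys' where ys: "ys = b # ys'" and len: "length ys' = length xs"
    by (cases ys) auto
  with Cons.prems have "of_bool a * 2 ^ length xs + bv_val xs = of_bool b * 2 ^ length xs + bv_val ys'"
    by simp
  then have "(of_bool a :: nat) = of_bool b" "bv_val xs = bv_val ys'"
    using high_low_eq_iff bv_val_less[of xs] bv_val_less[of ys'] len by fastforce+
  with Cons.IH len ys show ?case by (simp add: of_bool_eq_iff)
qed simp

lemma bv_eq_iff_bv_val_eq: "length xs = length ys \<Longrightarrow> xs = ys \<longleftrightarrow> bv_val xs = bv_val ys"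
  using bv_val_inject by auto

lemma length_bv_of [simp]: "length (bv_of m x) = m"
  by (simp add: bv_of_def)

lemma bv_of_Suc: "bv_of (Suc m) x = bit x m # bv_of m x"
  unfolding bv_of_def by (simp add: upt_conv_Cons map_Suc_upt[symmetric] del: upt_Suc)

lemma bv_val_bv_of [simp]: "bv_val (bv_of m x) = x mod 2 ^ m"
proof (induction m)
  case (Suc m)
  then show ?case
    using take_bit_Suc_from_most[of m x] by (simp add: bv_of_Suc take_bit_eq_mod)
qed (simp add: bv_of_def)

lemma bv_of_bv_val: "length xs = n \<Longrightarrow> bv_of n (bv_val xs) = xs"
  using bv_val_less[of xs] by (intro bv_val_inject) simp_all

lemma bv_val_bv_xor:
  "length xs = length ys \<Longrightarrow> bv_val (bv_xor xs ys) = xor (bv_val xs) (bv_val ys)"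
proof (induction xs arbitrary: ys)
  case (Cons a xs)
  then obtain b ys' where ys: "ys = b # ys'" and len: "length ys' = length xs"
    by (cases ys) auto
  have "xor (of_bool a) (of_bool b) = (of_bool (a \<noteq> b) :: nat)"
    by (cases a; cases b) simp_all
  then show ?case
    using Cons.IH[OF len[symmetric]] len ys bv_val_less[of xs] bv_val_less[of ys']
    by (simp add: bv_xor_def xor_high_low)
qed (simp add: bv_xor_def)

lemma length_bv_xor [simp]: "length (bv_xor xs ys) = min (length xs) (length ys)"
  by (simp add: bv_xor_def)

lemma length_bv_add [simp]: "length (bv_add xs ys) = length xs"
  by (simp add: bv_add_def)

lemma bv_val_bv_add: "bv_val (bv_add xs ys) = (bv_val xs + bv_val ys) mod 2 ^ length xs"
  by (simp add: bv_add_def)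

lemma length_bv_rotl [simp]: "length (bv_rotl xs r) = length xs"
  by (simp add: bv_rotl_def)

definition rotl_nat :: "nat \<Rightarrow> nat \<Rightarrow> nat \<Rightarrow> nat" where
  "rotl_nat m r w = (w mod 2 ^ m) * 2 ^ r + w div 2 ^ m"

lemma bv_val_bv_rotl:
  assumes "r < length xs"
  shows "bv_val (bv_rotl xs r) = rotl_nat (length xs - r) r (bv_val xs)"
proof -
  have "bv_rotl xs r = drop r xs @ take r xs"
    using assms by (simp add: bv_rotl_def rotate_drop_take)
  moreover have "bv_val xs = bv_val (take r xs) * 2 ^ (length xs - r) + bv_val (drop r xs)"
    using bv_val_append[of "take r xs" "drop r xs"] by simp
  moreover have "bv_val (drop r xs) < 2 ^ (length xs - r)"
    using bv_val_less[of "drop r xs"] by simp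
  ultimately show ?thesis
    using assms by (simp add: rotl_nat_def bv_val_append)
qed

lemma card_bv_pairs:
  "card {(x, y). length x = n \<and> length y = n \<and> P x y} =
     (\<Sum>u<2 ^ n. \<Sum>v<2 ^ n. of_bool (P (bv_of n u) (bv_of n v)))"
proof -
  let ?S = "SIGMA u:{..<2 ^ n}. {v. v < 2 ^ n \<and> P (bv_of n u) (bv_of n v)}"
  have "bij_betw (\<lambda>(u, v). (bv_of n u, bv_of n v)) ?S {(x, y). length x = n \<and> length y = n \<and> P x y}"
    by (rule bij_betw_byWitness[where f' = "\<lambda>(x, y). (bv_val x, bv_val y)"])
      (auto simp: bv_of_bv_val intro: bv_val_less[THEN less_le_trans])
  then have "card {(x, y). length x = n \<and> length y = n \<and> P x y} = card ?S"
    by (simp add: bij_betw_same_card)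
  also have "\<dots> = (\<Sum>u<2 ^ n. \<Sum>v<2 ^ n. of_bool (P (bv_of n u) (bv_of n v)))"
    by (simp add: card_SigmaI Int_def)
  finally show ?thesis .
qed

section \<open>The carry automaton\<close>

text \<open>A carry state \<open>s < 8\<close> packs the carries into the three additions \<open>x + a\<close>, \<open>y + b\<close> and
  \<open>(x xor y) + g\<close> as its bits of weight 4, 2 and 1, matching the indexing of the matrices \<open>A\<^sub>k\<close>.\<close>

definition adp_xor_cond :: "nat \<Rightarrow> nat \<Rightarrow> nat \<Rightarrow> nat \<Rightarrow> nat \<Rightarrow> nat \<Rightarrow> nat \<Rightarrow> bool" where
  "adp_xor_cond m s a b g x y \<longleftrightarrow>
     xor ((x + a + s div 4) mod 2 ^ m) ((y + b + s div 2 mod 2) mod 2 ^ m) =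
     (xor x y + g + s mod 2) mod 2 ^ m"

definition adp_xor_carry :: "nat \<Rightarrow> nat \<Rightarrow> nat \<Rightarrow> nat \<Rightarrow> nat \<Rightarrow> nat \<Rightarrow> nat \<Rightarrow> nat" where
  "adp_xor_carry m s a b g x y =
     4 * ((x + a + s div 4) div 2 ^ m) + 2 * ((y + b + s div 2 mod 2) div 2 ^ m) +
     (xor x y + g + s mod 2) div 2 ^ m"

lemma adp_xor_carry_less_8:
  assumes "x < 2 ^ m" "y < 2 ^ m" "a < 2 ^ m" "b < 2 ^ m" "g < 2 ^ m" "s < 8"
  shows "adp_xor_carry m s a b g x y < 8"
proof -
  have "(x + a + s div 4) div 2 ^ m \<le> 1" "(y + b + s div 2 mod 2) div 2 ^ m \<le> 1"
    "(xor x y + g + s mod 2) div 2 ^ m \<le> 1"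
    using assms by - (rule carry_le_1; auto intro: xor_less_power2)+
  then show ?thesis
    unfolding adp_xor_carry_def by linarith
qed

lemma add_high_low:
  "(xh * 2 ^ k + xl) + (ah * 2 ^ k + al) + (c :: nat) =
     (xh + ah + (xl + al + c) div 2 ^ k) * 2 ^ k + (xl + al + c) mod 2 ^ k"
  by (simp add: algebra_simps)

lemma adp_xor_concat:
  fixes xl yl al bl gl s :: nat
  assumes low: "xl < 2 ^ k" "yl < 2 ^ k" "al < 2 ^ k" "bl < 2 ^ k" "gl < 2 ^ k" and "s < 8"
  defines "d \<equiv> adp_xor_carry k s al bl gl xl yl"
  shows "adp_xor_cond (k + j) s (ah * 2 ^ k + al) (bh * 2 ^ k + bl) (gh * 2 ^ k + gl)
             (xh * 2 ^ k + xl) (yh * 2 ^ k + yl) \<longleftrightarrow>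
           adp_xor_cond k s al bl gl xl yl \<and> adp_xor_cond j d ah bh gh xh yh"
    and "adp_xor_carry (k + j) s (ah * 2 ^ k + al) (bh * 2 ^ k + bl) (gh * 2 ^ k + gl)
             (xh * 2 ^ k + xl) (yh * 2 ^ k + yl) = adp_xor_carry j d ah bh gh xh yh"
proof -
  define L1 where "L1 = xl + al + s div 4"
  define L2 where "L2 = yl + bl + s div 2 mod 2"
  define L3 where "L3 = xor xl yl + gl + s mod 2"
  have "L1 div 2 ^ k \<le> 1" "L2 div 2 ^ k \<le> 1" "L3 div 2 ^ k \<le> 1"
    unfolding L1_def L2_def L3_def using low \<open>s < 8\<close>
    by - (rule carry_le_1; auto intro: xor_less_power2)+
  then have d: "d div 4 = L1 div 2 ^ k" "d div 2 mod 2 = L2 div 2 ^ k" "d mod 2 = L3 div 2 ^ k"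
    unfolding d_def adp_xor_carry_def L1_def L2_def L3_def by (auto simp: le_Suc_eq)
  have x: "xor (xh * 2 ^ k + xl) (yh * 2 ^ k + yl) = xor xh yh * 2 ^ k + xor xl yl"
    using low by (simp add: xor_high_low)
  have m: "\<And>L. L mod 2 ^ k < (2::nat) ^ k"
    by simp
  note sums = add_high_low[of _ k _ _ _ "s div 4"] add_high_low[of _ k _ _ _ "s div 2 mod 2"]
    add_high_low[of _ k _ _ _ "s mod 2"]
  have "adp_xor_cond (k + j) s (ah * 2 ^ k + al) (bh * 2 ^ k + bl) (gh * 2 ^ k + gl)
          (xh * 2 ^ k + xl) (yh * 2 ^ k + yl) \<longleftrightarrow>
      xor ((xh + ah + L1 div 2 ^ k) mod 2 ^ j) ((yh + bh + L2 div 2 ^ k) mod 2 ^ j) * 2 ^ k +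
        xor (L1 mod 2 ^ k) (L2 mod 2 ^ k) =
      ((xor xh yh + gh + L3 div 2 ^ k) mod 2 ^ j) * 2 ^ k + L3 mod 2 ^ k"
    unfolding adp_xor_cond_def x sums high_low_mod[OF m] xor_high_low[OF m m] L1_def L2_def L3_def ..
  also have "\<dots> \<longleftrightarrow> adp_xor_cond k s al bl gl xl yl \<and> adp_xor_cond j d ah bh gh xh yh"
    unfolding adp_xor_cond_def d L1_def L2_def L3_def
    using high_low_eq_iff[OF xor_less_power2[OF m m] m] by blast
  finally show "adp_xor_cond (k + j) s (ah * 2 ^ k + al) (bh * 2 ^ k + bl) (gh * 2 ^ k + gl)
      (xh * 2 ^ k + xl) (yh * 2 ^ k + yl) \<longleftrightarrow>
    adp_xor_cond k s al bl gl xl yl \<and> adp_xor_cond j d ah bh gh xh yh" .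
  show "adp_xor_carry (k + j) s (ah * 2 ^ k + al) (bh * 2 ^ k + bl) (gh * 2 ^ k + gl)
      (xh * 2 ^ k + xl) (yh * 2 ^ k + yl) = adp_xor_carry j d ah bh gh xh yh"
    unfolding adp_xor_carry_def[of "k + j"] adp_xor_carry_def[of j d] x sums high_low_div[OF m] d
      L1_def L2_def L3_def ..
qed

lemma adp_xor_indicator_concat:
  fixes xl yl al bl gl :: nat
  assumes low: "xl < 2 ^ k" "yl < 2 ^ k" "al < 2 ^ k" "bl < 2 ^ k" "gl < 2 ^ k" and "s < 8"
  shows "(of_bool (adp_xor_cond (k + j) s (ah * 2 ^ k + al) (bh * 2 ^ k + bl) (gh * 2 ^ k + gl)
              (xh * 2 ^ k + xl) (yh * 2 ^ k + yl) \<and>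
            adp_xor_carry (k + j) s (ah * 2 ^ k + al) (bh * 2 ^ k + bl) (gh * 2 ^ k + gl)
              (xh * 2 ^ k + xl) (yh * 2 ^ k + yl) = t) :: real) =
    (\<Sum>d<8. of_bool (adp_xor_cond k s al bl gl xl yl \<and> adp_xor_carry k s al bl gl xl yl = d) *
       of_bool (adp_xor_cond j d ah bh gh xh yh \<and> adp_xor_carry j d ah bh gh xh yh = t))"
proof -
  let ?d = "adp_xor_carry k s al bl gl xl yl"
  have "?d < 8"
    using assms by (rule adp_xor_carry_less_8)
  then have sum_eq: "(\<Sum>d<8. of_bool (adp_xor_cond k s al bl gl xl yl \<and> ?d = d) *
       of_bool (adp_xor_cond j d ah bh gh xh yh \<and> adp_xor_carry j d ah bh gh xh yh = t)) =
     (of_bool (adp_xor_cond k s al bl gl xl yl) *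
       of_bool (adp_xor_cond j ?d ah bh gh xh yh \<and> adp_xor_carry j ?d ah bh gh xh yh = t) :: real)"
    by (subst sum.mono_neutral_right[of "{..<8}" "{?d}"]) auto
  show ?thesis
    unfolding adp_xor_concat[OF assms] sum_eq by simp
qed

lemma less_8_cases: "(i::nat) < 8 \<Longrightarrow> i = 0 \<or> i = 1 \<or> i = 2 \<or> i = 3 \<or> i = 4 \<or> i = 5 \<or> i = 6 \<or> i = 7"
  by arith

lemma adp_xor_one_bit:
  assumes "w < 8" "d < 8" "t < 8"
  shows "(\<Sum>x<2. \<Sum>y<2. of_bool (adp_xor_cond 1 d (w div 4) (w div 2 mod 2) (w mod 2) x y \<and>
            adp_xor_carry 1 d (w div 4) (w div 2 mod 2) (w mod 2) x y = t) :: real) =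
         4 * Amat w t d"
proof -
  have sum_2: "(\<Sum>x<2::nat. f x) = f 0 + f 1" for f :: "nat \<Rightarrow> real"
    by (simp add: numeral_2_eq_2)
  show ?thesis
    unfolding sum_2
    using less_8_cases[OF assms(1)] less_8_cases[OF assms(2)] less_8_cases[OF assms(3)]
    by (elim disjE) (simp_all add: adp_xor_cond_def adp_xor_carry_def Amat_def A0_def A0_int_def)
qed

fun prodvec_from :: "nat \<Rightarrow> nat list \<Rightarrow> nat \<Rightarrow> real" where
  "prodvec_from s [] = (\<lambda>i. if i = s then 1 else 0)"
| "prodvec_from s (k # ks) = (\<lambda>i. \<Sum>j<8. Amat k i j * prodvec_from s ks j)"

lemma prodvec_eq_prodvec_from: "prodvec ws = prodvec_from 0 ws"
  by (induction ws) auto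

lemma omegas_Cons:
  "length al = length bl \<Longrightarrow> length al = length gl \<Longrightarrow>
   omegas (a # al) (b # bl) (g # gl) = (4 * of_bool a + 2 * of_bool b + of_bool g) # omegas al bl gl"
  unfolding omegas_def by (simp add: upt_conv_Cons map_Suc_upt[symmetric] del: upt_Suc)

lemma sum_adp_xor_carry_eq:
  assumes "length al = m" "length bl = m" "length gl = m" "s < 8" "t < 8"
  shows "(\<Sum>x<2 ^ m. \<Sum>y<2 ^ m.
            of_bool (adp_xor_cond m s (bv_val al) (bv_val bl) (bv_val gl) x y \<and>
                     adp_xor_carry m s (bv_val al) (bv_val bl) (bv_val gl) x y = t) :: real) =
         4 ^ m * prodvec_from s (omegas al bl gl) t"
  using assms
proof (induction m arbitrary: al bl gl t)
  case 0
  then have "4 * (s div 4) + 2 * (s div 2 mod 2) + s mod 2 = s"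
    by (auto dest!: less_8_cases)
  with 0 show ?case
    by (simp add: adp_xor_cond_def adp_xor_carry_def omegas_def)
next
  case (Suc m)
  then obtain a al' b bl' g gl' where lists: "al = a # al'" "bl = b # bl'" "gl = g # gl'"
    and lens: "length al' = m" "length bl' = m" "length gl' = m"
    by (auto simp: length_Suc_conv)
  define w :: nat where "w = 4 * of_bool a + 2 * of_bool b + of_bool g"
  have w: "w < 8" "w div 4 = of_bool a" "w div 2 mod 2 = of_bool b" "w mod 2 = of_bool g"
    unfolding w_def by (cases a; cases b; cases g; simp)+
  have bounds: "bv_val al' < 2 ^ m" "bv_val bl' < 2 ^ m" "bv_val gl' < 2 ^ m"
    using bv_val_less lens by metis+
  define F where "F x y d = (of_bool (adp_xor_cond m s (bv_val al') (bv_val bl') (bv_val gl') x y \<and>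
      adp_xor_carry m s (bv_val al') (bv_val bl') (bv_val gl') x y = d) :: real)" for x y d
  define H where "H x y d = (of_bool (adp_xor_cond 1 d (w div 4) (w div 2 mod 2) (w mod 2) x y \<and>
      adp_xor_carry 1 d (w div 4) (w div 2 mod 2) (w mod 2) x y = t) :: real)" for x y d
  have vals: "bv_val al = of_bool a * 2 ^ m + bv_val al'" "bv_val bl = of_bool b * 2 ^ m + bv_val bl'"
    "bv_val gl = of_bool g * 2 ^ m + bv_val gl'"
    using lists lens by simp_all
  have split: "(of_bool (adp_xor_cond (m + 1) s (bv_val al) (bv_val bl) (bv_val gl)
        (xh * 2 ^ m + xl) (yh * 2 ^ m + yl) \<and>
      adp_xor_carry (m + 1) s (bv_val al) (bv_val bl) (bv_val gl)
        (xh * 2 ^ m + xl) (yh * 2 ^ m + yl) = t) :: real) = (\<Sum>d<8. F xl yl d * H xh yh d)"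
    if "xl < 2 ^ m" "yl < 2 ^ m" for xh xl yh yl
    unfolding vals F_def H_def w(2-4) using adp_xor_indicator_concat[OF that bounds Suc.prems(4)] .
  have "(\<Sum>x<2 ^ Suc m. \<Sum>y<2 ^ Suc m.
            of_bool (adp_xor_cond (Suc m) s (bv_val al) (bv_val bl) (bv_val gl) x y \<and>
                     adp_xor_carry (Suc m) s (bv_val al) (bv_val bl) (bv_val gl) x y = t) :: real) =
      (\<Sum>xh<2. \<Sum>xl<2 ^ m. \<Sum>yh<2. \<Sum>yl<2 ^ m. \<Sum>d<8. F xl yl d * H xh yh d)"
    unfolding Suc_eq_plus1 sum_lessThan_power2_add[of _ m 1]
    by (intro sum.cong refl) (simp_all only: lessThan_iff power_one_right split)
  also have "\<dots> = (\<Sum>d<8. (\<Sum>xl<2 ^ m. \<Sum>yl<2 ^ m. F xl yl d) * (\<Sum>xh<2. \<Sum>yh<2. H xh yh d))"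
    by (rule sum_interleaved_product)
  also have "\<dots> = (\<Sum>d<8. 4 ^ m * prodvec_from s (omegas al' bl' gl') d * (4 * Amat w t d))"
    unfolding F_def H_def using Suc.IH[OF lens Suc.prems(4)] adp_xor_one_bit[OF w(1) _ Suc.prems(5)]
    by simp
  also have "\<dots> = 4 ^ Suc m * prodvec_from s (omegas al bl gl) t"
    using lens by (simp add: lists omegas_Cons w_def sum_distrib_left algebra_simps)
  finally show ?case .
qed

lemma sum_adp_xor_carry_pred:
  assumes "length al = m" "length bl = m" "length gl = m" "s < 8"
  shows "(\<Sum>x<2 ^ m. \<Sum>y<2 ^ m.
            of_bool (adp_xor_cond m s (bv_val al) (bv_val bl) (bv_val gl) x y \<and>
                     P (adp_xor_carry m s (bv_val al) (bv_val bl) (bv_val gl) x y)) :: real) =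
         4 ^ m * (\<Sum>t<8. of_bool (P t) * prodvec_from s (omegas al bl gl) t)"
proof -
  let ?ok = "adp_xor_cond m s (bv_val al) (bv_val bl) (bv_val gl)"
  let ?carry = "adp_xor_carry m s (bv_val al) (bv_val bl) (bv_val gl)"
  have split: "(of_bool (?ok x y \<and> P (?carry x y)) :: real) =
      (\<Sum>t<8. of_bool (P t) * of_bool (?ok x y \<and> ?carry x y = t))"
    if "x < 2 ^ m" "y < 2 ^ m" for x y
  proof -
    have "?carry x y < 8"
      using that assms bv_val_less by (metis adp_xor_carry_less_8)
    then show ?thesis
      by (subst sum.mono_neutral_right[of "{..<8}" "{?carry x y}"]) auto
  qed
  have "(\<Sum>x<2 ^ m. \<Sum>y<2 ^ m. of_bool (?ok x y \<and> P (?carry x y)) :: real) =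
      (\<Sum>x<2 ^ m. \<Sum>y<2 ^ m. \<Sum>t<8. of_bool (P t) * of_bool (?ok x y \<and> ?carry x y = t))"
    by (intro sum.cong refl) (simp_all only: lessThan_iff split)
  also have "\<dots> = (\<Sum>t<8. \<Sum>x<2 ^ m. \<Sum>y<2 ^ m. of_bool (P t) * of_bool (?ok x y \<and> ?carry x y = t))"
    by (subst sum.swap) (rule sum.cong[OF refl], rule sum.swap)
  also have "\<dots> = (\<Sum>t<8. of_bool (P t) * (\<Sum>x<2 ^ m. \<Sum>y<2 ^ m. of_bool (?ok x y \<and> ?carry x y = t)))"
    by (simp only: sum_distrib_left)
  also have "\<dots> = 4 ^ m * (\<Sum>t<8. of_bool (P t) * prodvec_from s (omegas al bl gl) t)"
    using sum_adp_xor_carry_eq[OF assms] by (simp add: sum_distrib_left)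
  finally show ?thesis .
qed

section \<open>Complemented inputs\<close>

lemma xor_less_8: "(i::nat) < 8 \<Longrightarrow> k < 8 \<Longrightarrow> xor i k < 8"
  using xor_less_power2[of i 3 k] by simp

lemma prodvec_from_xor:
  assumes "k < 8"
  shows "prodvec_from 0 (map (\<lambda>w. xor w k) ws) i = prodvec_from k ws (xor i k)"
proof (induction ws arbitrary: i)
  case Nil
  have "xor i k = k \<longleftrightarrow> i = 0"
    by (metis xor.comm_neutral xor.commute xor.left_commute xor_self_eq)
  then show ?case by simp
next
  case (Cons w ws)
  have "prodvec_from 0 (map (\<lambda>w. xor w k) (w # ws)) i =
      (\<Sum>j<8. A0 (xor i (xor w k)) (xor j (xor w k)) * prodvec_from k ws (xor j k))"
    using Cons.IH by (simp add: Amat_def)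
  also have "\<dots> = (\<Sum>j<8. A0 (xor (xor i k) w) (xor j w) * prodvec_from k ws j)"
    by (rule sum.reindex_bij_witness[where i = "\<lambda>j. xor j k" and j = "\<lambda>j. xor j k"])
      (use assms xor_less_8 in \<open>auto simp: ac_simps\<close>)
  also have "\<dots> = prodvec_from k (w # ws) (xor i k)"
    by (simp add: Amat_def)
  finally show ?case .
qed

lemma nth_bv_cpl: "i < length g \<Longrightarrow> bv_cpl g c ! i = (g ! i \<noteq> c)"
  by (cases c) (auto simp: bv_cpl_def)

lemma length_bv_cpl [simp]: "length (bv_cpl g c) = length g"
  by (simp add: bv_cpl_def)

lemma omegas_bv_cpl_third:
  assumes "length a = length b" "length a = length g"
  shows "omegas a b (bv_cpl g c) = map (\<lambda>w. xor w (of_bool c)) (omegas a b g)"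
proof -
  have "xor (4 * of_bool p + 2 * of_bool q + of_bool r) (of_bool c) =
      (4 * of_bool p + 2 * of_bool q + of_bool (r \<noteq> c) :: nat)" for p q r
    by (cases p; cases q; cases r; cases c) (simp_all flip: numeral_2_eq_2 numeral_3_eq_3)
  then show ?thesis
    using assms unfolding omegas_def by (intro nth_equalityI) (simp_all add: nth_bv_cpl)
qed

lemma omegas_bv_cpl_first_second:
  assumes "length a = length b" "length a = length g"
  shows "omegas (bv_cpl a x) (bv_cpl b y) g =
    map (\<lambda>w. xor w (4 * of_bool x + 2 * of_bool y)) (omegas a b g)"
proof -
  have "xor (4 * of_bool p + 2 * of_bool q + of_bool r) (4 * of_bool x + 2 * of_bool y) =
      (4 * of_bool (p \<noteq> x) + 2 * of_bool (q \<noteq> y) + of_bool r :: nat)" for p q r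
    by (cases p; cases q; cases r; cases x; cases y) (simp_all flip: numeral_2_eq_2 numeral_3_eq_3)
  then show ?thesis
    using assms unfolding omegas_def by (intro nth_equalityI) (simp_all add: nth_bv_cpl)
qed

lemma sum_lessThan_8: "(\<Sum>i<8::nat. f i) = f 0 + f 1 + f 2 + f 3 + f 4 + f 5 + f 6 + f 7"
  by (simp add: eval_nat_numeral)

lemma padp_bv_cpl:
  assumes "length al = length bl" "length al = length gl"
  shows "padp a b al bl (bv_cpl gl c) =
    (\<Sum>t<8. of_bool (t div 2 = 2 * of_bool a + of_bool b) * prodvec_from (of_bool c) (omegas al bl gl) t)"
  unfolding padp_def rowvec_def prodvec_eq_prodvec_from omegas_bv_cpl_third[OF assms]
  by (cases a; cases b; cases c) (simp_all add: prodvec_from_xor sum_lessThan_8 Lab_def)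

lemma cadp_bv_cpl:
  assumes "length al = length bl" "length al = length gl"
  shows "cadp c (bv_cpl al a) (bv_cpl bl b) gl =
    (\<Sum>t<8. of_bool (t mod 2 = of_bool c) * prodvec_from (4 * of_bool a + 2 * of_bool b) (omegas al bl gl) t)"
  unfolding cadp_def rowvec_def prodvec_eq_prodvec_from omegas_bv_cpl_first_second[OF assms]
  by (cases a; cases b; cases c) (simp_all add: prodvec_from_xor sum_lessThan_8 Lc_def flip: numeral_2_eq_2 numeral_3_eq_3)

lemma sum_adp_xor_eq_padp:
  assumes "length al = m" "length bl = m" "length gl = m"
  shows "(\<Sum>x<2 ^ m. \<Sum>y<2 ^ m.
            of_bool (adp_xor_cond m (of_bool c) (bv_val al) (bv_val bl) (bv_val gl) x y \<and>
              adp_xor_carry m (of_bool c) (bv_val al) (bv_val bl) (bv_val gl) x y div 2 =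
                2 * of_bool a + of_bool b) :: real) =
         4 ^ m * padp a b al bl (bv_cpl gl c)"
  using sum_adp_xor_carry_pred[OF assms, of "of_bool c" "\<lambda>t. t div 2 = 2 * of_bool a + of_bool b"]
  by (simp add: padp_bv_cpl assms)

lemma sum_adp_xor_eq_cadp:
  assumes "length al = r" "length bl = r" "length gl = r"
  shows "(\<Sum>x<2 ^ r. \<Sum>y<2 ^ r.
            of_bool (adp_xor_cond r (4 * of_bool a + 2 * of_bool b) (bv_val al) (bv_val bl) (bv_val gl) x y \<and>
              adp_xor_carry r (4 * of_bool a + 2 * of_bool b) (bv_val al) (bv_val bl) (bv_val gl) x y mod 2 =
                of_bool c) :: real) =
         4 ^ r * cadp c (bv_cpl al a) (bv_cpl bl b) gl"
  using sum_adp_xor_carry_pred[OF assms, of "4 * of_bool a + 2 * of_bool b" "\<lambda>t. t mod 2 = of_bool c"]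
  by (simp add: cadp_bv_cpl assms)

section \<open>Splitting the rotation\<close>

definition xr_cond :: "nat \<Rightarrow> nat \<Rightarrow> nat \<Rightarrow> nat \<Rightarrow> nat \<Rightarrow> nat \<Rightarrow> nat \<Rightarrow> bool" where
  "xr_cond m r A B G u v \<longleftrightarrow>
     rotl_nat m r (xor ((u + A) mod 2 ^ (m + r)) ((v + B) mod 2 ^ (m + r))) =
     (rotl_nat m r (xor u v) + G) mod 2 ^ (m + r)"

lemma xr_cond_high_low:
  fixes u0 v0 al bl gl u1 v1 ah bh gh :: nat
  assumes low: "u0 < 2 ^ m" "v0 < 2 ^ m" "al < 2 ^ m" "bl < 2 ^ m" "gl < 2 ^ m"
    and high: "u1 < 2 ^ r" "v1 < 2 ^ r" "ah < 2 ^ r" "bh < 2 ^ r" "gh < 2 ^ r"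
  shows "xr_cond m r (ah * 2 ^ m + al) (bh * 2 ^ m + bl) (gl * 2 ^ r + gh)
           (u1 * 2 ^ m + u0) (v1 * 2 ^ m + v0) \<longleftrightarrow>
         adp_xor_cond m ((xor u1 v1 + gh) div 2 ^ r) al bl gl u0 v0 \<and>
         adp_xor_cond r (4 * ((u0 + al) div 2 ^ m) + 2 * ((v0 + bl) div 2 ^ m)) ah bh gh u1 v1"
proof -
  define a0 where "a0 = (u0 + al) div 2 ^ m"
  define b0 where "b0 = (v0 + bl) div 2 ^ m"
  define c0 where "c0 = (xor u1 v1 + gh) div 2 ^ r"
  have carries: "a0 \<le> 1" "b0 \<le> 1" "c0 \<le> 1"
    unfolding a0_def b0_def c0_def using low high
    by (metis add_0_right carry_le_1 zero_le_one xor_less_power2)+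
  have mm: "\<And>L. L mod 2 ^ m < (2::nat) ^ m" and mr: "\<And>L. L mod 2 ^ r < (2::nat) ^ r"
    by simp_all
  let ?H1 = "(u1 + ah + a0) mod 2 ^ r" and ?H2 = "(v1 + bh + b0) mod 2 ^ r"
  let ?l1 = "(u0 + al) mod 2 ^ m" and ?l2 = "(v0 + bl) mod 2 ^ m"
  have lhs: "rotl_nat m r (xor ((u1 * 2 ^ m + u0 + (ah * 2 ^ m + al)) mod 2 ^ (m + r))
                               ((v1 * 2 ^ m + v0 + (bh * 2 ^ m + bl)) mod 2 ^ (m + r))) =
      xor ?l1 ?l2 * 2 ^ r + xor ?H1 ?H2"
    using add_high_low[of u1 m u0 ah al 0] add_high_low[of v1 m v0 bh bl 0] xor_less_power2[OF mm mm]
    by (simp add: a0_def b0_def high_low_mod xor_high_low rotl_nat_def)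
  have "rotl_nat m r (xor (u1 * 2 ^ m + u0) (v1 * 2 ^ m + v0)) = xor u0 v0 * 2 ^ r + xor u1 v1"
    using low xor_less_power2[of u0 m v0] by (simp add: xor_high_low rotl_nat_def)
  then have rhs: "(rotl_nat m r (xor (u1 * 2 ^ m + u0) (v1 * 2 ^ m + v0)) + (gl * 2 ^ r + gh)) mod 2 ^ (m + r) =
      ((xor u0 v0 + gl + c0) mod 2 ^ m) * 2 ^ r + (xor u1 v1 + gh) mod 2 ^ r"
    using add_high_low[of "xor u0 v0" r "xor u1 v1" gl gh 0]
    by (simp add: c0_def high_low_mod add.commute[of m r])
  have "xr_cond m r (ah * 2 ^ m + al) (bh * 2 ^ m + bl) (gl * 2 ^ r + gh)
           (u1 * 2 ^ m + u0) (v1 * 2 ^ m + v0) \<longleftrightarrow>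
      xor ?l1 ?l2 = (xor u0 v0 + gl + c0) mod 2 ^ m \<and> xor ?H1 ?H2 = (xor u1 v1 + gh) mod 2 ^ r"
    unfolding xr_cond_def lhs rhs using high_low_eq_iff[OF xor_less_power2[OF mr mr] mr] by blast
  moreover have "adp_xor_cond m c0 al bl gl u0 v0 \<longleftrightarrow> xor ?l1 ?l2 = (xor u0 v0 + gl + c0) mod 2 ^ m"
    unfolding adp_xor_cond_def using carries by (auto simp: le_Suc_eq)
  moreover have "adp_xor_cond r (4 * a0 + 2 * b0) ah bh gh u1 v1 \<longleftrightarrow> xor ?H1 ?H2 = (xor u1 v1 + gh) mod 2 ^ r"
    unfolding adp_xor_cond_def using carries by (auto simp: le_Suc_eq)
  ultimately show ?thesis
    unfolding a0_def b0_def c0_def by simp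
qed

lemma adp_xor_carry_div_2:
  assumes "c \<le> 1" "x < 2 ^ m" "y < 2 ^ m" "g < 2 ^ m"
  shows "adp_xor_carry m c a b g x y div 2 = 2 * ((x + a) div 2 ^ m) + (y + b) div 2 ^ m"
proof -
  have "(xor x y + g + c mod 2) div 2 ^ m \<le> 1"
    using assms by (intro carry_le_1 xor_less_power2) auto
  moreover have "c div 4 = 0" "c div 2 mod 2 = 0"
    using assms(1) by auto
  ultimately show ?thesis
    unfolding adp_xor_carry_def by auto
qed

lemma adp_xor_carry_mod_2:
  assumes "a \<le> 1" "b \<le> 1" "x < 2 ^ m" "y < 2 ^ m" "g < 2 ^ m"
  shows "adp_xor_carry m (4 * a + 2 * b) ha hb g x y mod 2 = (xor x y + g) div 2 ^ m"
proof -
  have carry: "(xor x y + g) div 2 ^ m \<le> 1"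
    using assms carry_le_1[of "xor x y" m g 0] xor_less_power2 by simp
  have "(4 * a + 2 * b) div 4 = a" "(4 * a + 2 * b) div 2 mod 2 = b"
    using assms by (auto simp: le_Suc_eq)
  then have carry_eq: "adp_xor_carry m (4 * a + 2 * b) ha hb g x y =
      4 * ((x + ha + a) div 2 ^ m) + 2 * ((y + hb + b) div 2 ^ m) + (xor x y + g) div 2 ^ m"
    unfolding adp_xor_carry_def by simp
  have "(4 * p + 2 * q + z) mod 2 = z" if "z \<le> 1" for p q z :: nat
    using that by presburger
  then show ?thesis
    unfolding carry_eq using carry by blast
qed

lemma xr_indicator_high_low:
  fixes u0 v0 al bl gl u1 v1 ah bh gh :: nat
  assumes low: "u0 < 2 ^ m" "v0 < 2 ^ m" "al < 2 ^ m" "bl < 2 ^ m" "gl < 2 ^ m"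
    and high: "u1 < 2 ^ r" "v1 < 2 ^ r" "ah < 2 ^ r" "bh < 2 ^ r" "gh < 2 ^ r"
  shows "(of_bool (xr_cond m r (ah * 2 ^ m + al) (bh * 2 ^ m + bl) (gl * 2 ^ r + gh)
             (u1 * 2 ^ m + u0) (v1 * 2 ^ m + v0)) :: real) =
    (\<Sum>a\<in>UNIV. \<Sum>b\<in>UNIV. \<Sum>c\<in>UNIV.
       of_bool (adp_xor_cond m (of_bool c) al bl gl u0 v0 \<and>
         adp_xor_carry m (of_bool c) al bl gl u0 v0 div 2 = 2 * of_bool a + of_bool b) *
       of_bool (adp_xor_cond r (4 * of_bool a + 2 * of_bool b) ah bh gh u1 v1 \<and>
         adp_xor_carry r (4 * of_bool a + 2 * of_bool b) ah bh gh u1 v1 mod 2 = of_bool c))"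
proof -
  have of_bool_if_le_1: "\<exists>p. k = of_bool p" if "k \<le> 1" for k :: nat
    using that by (intro exI[of _ "k = 1"]) auto
  have "(u0 + al) div 2 ^ m \<le> 1" "(v0 + bl) div 2 ^ m \<le> 1" "(xor u1 v1 + gh) div 2 ^ r \<le> 1"
    using carry_le_1[of u0 m al 0] carry_le_1[of v0 m bl 0] carry_le_1[of "xor u1 v1" r gh 0]
      low high xor_less_power2[of u1 r v1]
    by simp_all
  then obtain a0 b0 c0 where carries: "(u0 + al) div 2 ^ m = of_bool a0"
      "(v0 + bl) div 2 ^ m = of_bool b0" "(xor u1 v1 + gh) div 2 ^ r = of_bool c0"
    using of_bool_if_le_1 by metis
  have low_carry: "adp_xor_carry m (of_bool c) al bl gl u0 v0 div 2 = 2 * of_bool a0 + of_bool b0" for c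
    using adp_xor_carry_div_2[OF _ low(1,2,5)] carries by simp
  have high_carry:
    "adp_xor_carry r (4 * of_bool a + 2 * of_bool b) ah bh gh u1 v1 mod 2 = of_bool c0" for a b
    using adp_xor_carry_mod_2[OF _ _ high(1,2,5)] carries by simp
  show ?thesis
    unfolding xr_cond_high_low[OF low high] carries low_carry high_carry sum_UNIV_bool
    by (cases a0; cases b0; cases c0) simp_all
qed

lemma sum_xr_cond_eq_padp_cadp:
  assumes low: "length \<alpha> = m" "length \<beta> = m" "length \<gamma> = m"
    and high: "length \<alpha>' = r" "length \<beta>' = r" "length \<gamma>' = r"
  shows "(\<Sum>u<2 ^ (m + r). \<Sum>v<2 ^ (m + r).
            of_bool (xr_cond m r (bv_val (\<alpha>' @ \<alpha>)) (bv_val (\<beta>' @ \<beta>)) (bv_val (\<gamma> @ \<gamma>')) u v) :: real) =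
    4 ^ (m + r) * (\<Sum>a\<in>UNIV. \<Sum>b\<in>UNIV. \<Sum>c\<in>UNIV.
      padp a b \<alpha> \<beta> (bv_cpl \<gamma> c) * cadp c (bv_cpl \<alpha>' a) (bv_cpl \<beta>' b) \<gamma>')"
proof -
  define F where "F u0 v0 d = (case d of (a, b, c) \<Rightarrow>
    (of_bool (adp_xor_cond m (of_bool c) (bv_val \<alpha>) (bv_val \<beta>) (bv_val \<gamma>) u0 v0 \<and>
      adp_xor_carry m (of_bool c) (bv_val \<alpha>) (bv_val \<beta>) (bv_val \<gamma>) u0 v0 div 2 =
        2 * of_bool a + of_bool b) :: real))" for u0 v0 d
  define G where "G u1 v1 d = (case d of (a, b, c) \<Rightarrow>
    (of_bool (adp_xor_cond r (4 * of_bool a + 2 * of_bool b) (bv_val \<alpha>') (bv_val \<beta>') (bv_val \<gamma>') u1 v1 \<and>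
      adp_xor_carry r (4 * of_bool a + 2 * of_bool b) (bv_val \<alpha>') (bv_val \<beta>') (bv_val \<gamma>') u1 v1 mod 2 =
        of_bool c) :: real))" for u1 v1 d
  have split: "(of_bool (xr_cond m r (bv_val (\<alpha>' @ \<alpha>)) (bv_val (\<beta>' @ \<beta>)) (bv_val (\<gamma> @ \<gamma>'))
        (u1 * 2 ^ m + u0) (v1 * 2 ^ m + v0)) :: real) = (\<Sum>d\<in>UNIV. F u0 v0 d * G u1 v1 d)"
    if "u0 < 2 ^ m" "v0 < 2 ^ m" "u1 < 2 ^ r" "v1 < 2 ^ r" for u0 v0 u1 v1
  proof -
    have bounds: "bv_val \<alpha> < 2 ^ m" "bv_val \<beta> < 2 ^ m" "bv_val \<gamma> < 2 ^ m"
      "bv_val \<alpha>' < 2 ^ r" "bv_val \<beta>' < 2 ^ r" "bv_val \<gamma>' < 2 ^ r"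
      using bv_val_less low high by metis+
    show ?thesis
      unfolding bv_val_append low high sum_bool_triple F_def G_def prod.case
      by (rule xr_indicator_high_low[OF that(1,2) bounds(1-3) that(3,4) bounds(4-6)])
  qed
  have "(\<Sum>u<2 ^ (m + r). \<Sum>v<2 ^ (m + r).
          of_bool (xr_cond m r (bv_val (\<alpha>' @ \<alpha>)) (bv_val (\<beta>' @ \<beta>)) (bv_val (\<gamma> @ \<gamma>')) u v) :: real) =
      (\<Sum>u1<2 ^ r. \<Sum>u0<2 ^ m. \<Sum>v1<2 ^ r. \<Sum>v0<2 ^ m. \<Sum>d\<in>UNIV. F u0 v0 d * G u1 v1 d)"
    unfolding sum_lessThan_power2_add by (intro sum.cong refl) (simp_all only: lessThan_iff split)
  also have "\<dots> = (\<Sum>d\<in>UNIV. (\<Sum>u0<2 ^ m. \<Sum>v0<2 ^ m. F u0 v0 d) * (\<Sum>u1<2 ^ r. \<Sum>v1<2 ^ r. G u1 v1 d))"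
    by (rule sum_interleaved_product)
  also have "\<dots> = (\<Sum>d\<in>UNIV. case d of (a, b, c) \<Rightarrow>
      4 ^ m * padp a b \<alpha> \<beta> (bv_cpl \<gamma> c) * (4 ^ r * cadp c (bv_cpl \<alpha>' a) (bv_cpl \<beta>' b) \<gamma>'))"
  proof (intro sum.cong refl)
    fix d :: "bool \<times> bool \<times> bool"
    obtain a b c where d: "d = (a, b, c)"
      by (cases d)
    show "(\<Sum>u0<2 ^ m. \<Sum>v0<2 ^ m. F u0 v0 d) * (\<Sum>u1<2 ^ r. \<Sum>v1<2 ^ r. G u1 v1 d) =
      (case d of (a, b, c) \<Rightarrow>
        4 ^ m * padp a b \<alpha> \<beta> (bv_cpl \<gamma> c) * (4 ^ r * cadp c (bv_cpl \<alpha>' a) (bv_cpl \<beta>' b) \<gamma>'))"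
      unfolding d F_def G_def prod.case sum_adp_xor_eq_padp[OF low] sum_adp_xor_eq_cadp[OF high] ..
  qed
  finally show ?thesis
    by (simp add: sum_bool_triple power_add sum_distrib_left algebra_simps)
qed

lemma bv_xr_cond_iff:
  assumes "r < n" "length x = n" "length y = n" "length a = n" "length b = n" "length g = n"
  shows "bv_rotl (bv_xor (bv_add x a) (bv_add y b)) r = bv_add (bv_rotl (bv_xor x y) r) g \<longleftrightarrow>
    xr_cond (n - r) r (bv_val a) (bv_val b) (bv_val g) (bv_val x) (bv_val y)"
proof -
  have "n - r + r = n"
    using assms(1) by simp
  then show ?thesis
    using assms
    by (simp add: bv_eq_iff_bv_val_eq bv_val_bv_rotl bv_val_bv_add bv_val_bv_xor xr_cond_def)
qed

lemma adpXR_eq_sum_xr_cond: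
  assumes "r < n" "length a = n" "length b = n" "length g = n"
  shows "adpXR n r a b g =
    (\<Sum>u<2 ^ n. \<Sum>v<2 ^ n. of_bool (xr_cond (n - r) r (bv_val a) (bv_val b) (bv_val g) u v)) / 4 ^ n"
proof -
  have eq: "bv_rotl (bv_xor (bv_add (bv_of n u) a) (bv_add (bv_of n v) b)) r =
      bv_add (bv_rotl (bv_xor (bv_of n u) (bv_of n v)) r) g \<longleftrightarrow>
    xr_cond (n - r) r (bv_val a) (bv_val b) (bv_val g) u v" if "u < 2 ^ n" "v < 2 ^ n" for u v
    using bv_xr_cond_iff[of r n "bv_of n u" "bv_of n v" a b g] assms that by simp
  show ?thesis
    unfolding adpXR_def card_bv_pairs of_nat_sum of_nat_of_bool
    by (intro arg_cong[where f = "\<lambda>s. s / 4 ^ n"] sum.cong refl) (simp_all only: lessThan_iff eq)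
qed

theorem theorem2:
  fixes n r :: nat and \<alpha> \<beta> \<gamma> \<alpha>' \<beta>' \<gamma>' :: "bool list"
  assumes "n \<ge> 2" and "1 \<le> r" and "r \<le> n - 1"
    and "length \<alpha> = n - r" and "length \<beta> = n - r" and "length \<gamma> = n - r"
    and "length \<alpha>' = r" and "length \<beta>' = r" and "length \<gamma>' = r"
  shows "adpXR n r (\<alpha>' @ \<alpha>) (\<beta>' @ \<beta>) (\<gamma> @ \<gamma>') =
    (\<Sum>a\<in>(UNIV::bool set). \<Sum>b\<in>(UNIV::bool set). \<Sum>c\<in>(UNIV::bool set).
       padp a b \<alpha> \<beta> (bv_cpl \<gamma> c) * cadp c (bv_cpl \<alpha>' a) (bv_cpl \<beta>' b) \<gamma>')"
proof -
  define m where "m = n - r"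
  have "r < n" and n: "n = m + r"
    using assms(1,3) by (simp_all add: m_def)
  have "adpXR n r (\<alpha>' @ \<alpha>) (\<beta>' @ \<beta>) (\<gamma> @ \<gamma>') =
      (\<Sum>u<2 ^ n. \<Sum>v<2 ^ n.
         of_bool (xr_cond m r (bv_val (\<alpha>' @ \<alpha>)) (bv_val (\<beta>' @ \<beta>)) (bv_val (\<gamma> @ \<gamma>')) u v)) / 4 ^ n"
    unfolding m_def using assms \<open>r < n\<close> by (intro adpXR_eq_sum_xr_cond) simp_all
  also have "\<dots> = (\<Sum>a\<in>UNIV. \<Sum>b\<in>UNIV. \<Sum>c\<in>UNIV.
       padp a b \<alpha> \<beta> (bv_cpl \<gamma> c) * cadp c (bv_cpl \<alpha>' a) (bv_cpl \<beta>' b) \<gamma>')"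
    unfolding n using sum_xr_cond_eq_padp_cadp[OF assms(4-9)[folded m_def]] by simp
  finally show ?thesis .
qed

end
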